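(* Let $L,\pi_L,\theta,a$ be as below (so $a^{-1}$ also satisfies the hypothesis). Then $$M(T,\theta,a)=-\theta(-1)\,\omega^{-1}(-1)\,M(T,\theta,a^{-1}).$$
   Context: Let $p\ge5$ be prime; $\zeta_{p^{n+1}}$ compatible primitive $p^{n+1}$-th roots of unity, $K_n=\mathbb Q_p(\zeta_{p^{n+1}})$, $\Gamma_n=\mathrm{Gal}(K_n/K_0)$, $\gamma_0\in\varprojlim\Gamma_n$ acting by $\zeta\mapsto\zeta^{1+p}$. For $a\in\mathbb Z_p^*$: $\omega(a)$ Teichmüller, $\langle a\rangle=a/\omega(a)$, $\gamma_n(a)\in\Gamma_n$: $\zeta_{p^{n+1}}\mapsto\zeta_{p^{n+1}}^{\langle a\rangle}$. $\widehat\Delta$ is the group of characters $\theta:(\mathbb Z/p)^*\cong\Delta\to\mu_{p-1}$ (powers of $\omega$), $\theta(k)$ for $p\nmid k$. Let $L$ be a finite extension of $\mathbb Q_p$, $O_L$ its integers, $\pi_L$ a uniformizer, $\Lambda_L=O_L[[T]]\cong\varprojlim O_L[\Gamma_n]$ with $T\leftrightarrow\gamma_0-1$. For $\theta\in\widehat\Delta$ and $a\in O_L$ with $a(a-1)\not\equiv0\pmod{\pi_L}$, $M_n(\theta,a)=\sum_{1\le k\le p^{n+1}-1,\,p\nmid k}\frac{a^k}{a^{p^{n+1}}-1}\theta(k)\omega^{-1}(k)\gamma_n(k)\in O_L[\Gamma_n]$; these form a compatible system under restriction, and $M(T,\theta,a)\in\Lambda_L$ denotes the corresponding power series (Mirimanoff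 power series). *)

theory Defs
  imports Complex_Main "HOL-Computational_Algebra.Primes"
begin

text \<open>
  The finite extension L of Q_p is modelled as a field of type 'a (characteristic 0)
  together with a normalized discrete valuation v : L^* -> Z (the value of v at 0 is
  irrelevant), such that L is complete with respect to v, the residue field
  O_L / m_L is finite, and its characteristic is p.  These are exactly (up to
  isomorphism) the finite extensions of Q_p.
\<close>

definition vge :: "('a::field \<Rightarrow> int) \<Rightarrow> 'a \<Rightarrow> int \<Rightarrow> bool" where
  "vge v x N \<longleftrightarrow> x = 0 \<or> v x \<ge> N"

definition int_ring :: "('a::field \<Rightarrow> int) \<Rightarrow> 'a set" where
  "int_ring v = {x. vge v x 0}"

definition padic_field :: "nat \<Rightarrow> ('a::field_char_0 \<Rightarrow> int) \<Rightarrow> bool" where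
  "padic_field p v \<longleftrightarrow>
     (\<forall>x y. x \<noteq> 0 \<longrightarrow> y \<noteq> 0 \<longrightarrow> v (x * y) = v x + v y) \<and>
     (\<forall>x y. x \<noteq> 0 \<longrightarrow> y \<noteq> 0 \<longrightarrow> x + y \<noteq> 0 \<longrightarrow> v (x + y) \<ge> min (v x) (v y)) \<and>
     (\<exists>\<pi>. \<pi> \<noteq> 0 \<and> v \<pi> = 1) \<and>
     vge v (of_nat p) 1 \<and>
     (\<exists>S. finite S \<and> S \<subseteq> int_ring v \<and> (\<forall>x\<in>int_ring v. \<exists>s\<in>S. vge v (x - s) 1)) \<and>
     (\<forall>f :: nat \<Rightarrow> 'a.
        (\<forall>N. \<exists>M. \<forall>m\<ge>M. \<forall>n\<ge>M. vge v (f m - f n) N) \<longrightarrow>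
        (\<exists>l. \<forall>N. \<exists>M. \<forall>n\<ge>M. vge v (f n - l) N))"

definition teich :: "nat \<Rightarrow> ('a::field_char_0 \<Rightarrow> int) \<Rightarrow> int \<Rightarrow> 'a" where
  "teich p v k = (THE x. vge v x 0 \<and> x ^ (p - 1) = 1 \<and> vge v (x - of_int k) 1)"

text \<open>Gamma_n = Gal(K_n/K_0) is identified with {u mod p^(n+1) : u = 1 mod p} via
  (zeta_{p^(n+1)} -> zeta_{p^(n+1)}^u).  gamma_idx p v n k is the representative
  u in [0, p^(n+1)) of <k> = k/omega(k) in Z_p modulo p^(n+1), i.e. the element
  gamma_n(k); it is characterised by p^(n+1) dividing u*omega(k) - k in O_L.\<close>
definition gamma_idx :: "nat \<Rightarrow> ('a::field_char_0 \<Rightarrow> int) \<Rightarrow> nat \<Rightarrow> int \<Rightarrow> nat" where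
  "gamma_idx p v n k = (THE u. u < p ^ (n + 1) \<and>
      vge v (of_nat u * teich p v k - of_int k) (v (of_nat p ^ (n + 1))))"

text \<open>Elements of O_L[Gamma_n] are represented as coefficient functions
  u -> coefficient of the group element u.  The character theta = omega^j.
  mirimanoff p v j a n is M_n(theta,a); the family over n is the element
  M(T,theta,a) of Lambda_L = lim O_L[Gamma_n].\<close>
definition mirimanoff :: "nat \<Rightarrow> ('a::field_char_0 \<Rightarrow> int) \<Rightarrow> nat \<Rightarrow> 'a \<Rightarrow> nat \<Rightarrow> nat \<Rightarrow> 'a" where
  "mirimanoff p v j a n u =
     (\<Sum>k \<in> {k::nat. 1 \<le> k \<and> k \<le> p ^ (n + 1) - 1 \<and> \<not> p dvd k \<and> gamma_idx p v n (int k) = u}.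
        a ^ k / (a ^ (p ^ (n + 1)) - 1) * teich p v (int k) ^ j * inverse (teich p v (int k)))"

end

theory Submission
  imports Defs "HOL-Number_Theory.Number_Theory"
begin

text \<open>
  Write N = p^(n+1). The substitution k \<mapsto> N - k permutes the indices of M_n(\<theta>, a) and
  turns a^(N-k)/(a^N - 1) into -a^(-k)/(a^(-N) - 1). It fixes \<gamma>_n(k), since
  \<langle>N - k\<rangle> = \<langle>k\<rangle>, and multiplies \<theta>(k)\<omega>^(-1)(k) by \<theta>(-1)\<omega>^(-1)(-1),
  since \<omega>(N - k) = -\<omega>(k). This last identity is read off from the characterisation of
  \<omega>(k) as the unique (p-1)-st root of unity in O_L congruent to k, so the real work is to
  show that such a root exists and is unique. It exists by completeness, as the limit of k^(p^n).
  It is unique because a (p-1)-st root of unity z \<noteq> 1 satisfies 1 + z + ... + z^(p-2) = 0,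
  whereas z \<equiv> 1 would make this sum congruent to the unit p - 1.
\<close>

locale nonarch_valuation =
  fixes v :: "'a::field \<Rightarrow> int"
  assumes v_mult: "x \<noteq> 0 \<Longrightarrow> y \<noteq> 0 \<Longrightarrow> v (x * y) = v x + v y"
    and v_add_ge_min: "x \<noteq> 0 \<Longrightarrow> y \<noteq> 0 \<Longrightarrow> x + y \<noteq> 0 \<Longrightarrow> v (x + y) \<ge> min (v x) (v y)"
begin

lemma v_one: "v 1 = 0"
  using v_mult[of 1 1] by simp

lemma v_minus: "v (- x) = v x"
proof (cases "x = 0")
  case False
  have "v (-1) = 0"
    using v_mult[of "-1" "-1"] v_one by simp
  with False show ?thesis
    using v_mult[of "-1" x] by simp
qed simp

lemma vge_zero [simp]: "vge v 0 N"
  by (simp add: vge_def)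

lemma vge_one: "vge v 1 0"
  by (simp add: vge_def v_one)

lemma vge_minus_iff [simp]: "vge v (- x) N \<longleftrightarrow> vge v x N"
  by (simp add: vge_def v_minus)

lemma vge_mono: "vge v x N \<Longrightarrow> M \<le> N \<Longrightarrow> vge v x M"
  unfolding vge_def by auto

lemma vge_add: "vge v x N \<Longrightarrow> vge v y N \<Longrightarrow> vge v (x + y) N"
  unfolding vge_def using v_add_ge_min[of x y] by fastforce

lemma vge_diff: "vge v x N \<Longrightarrow> vge v y N \<Longrightarrow> vge v (x - y) N"
  using vge_add[of x N "- y"] by simp

lemma vge_diff_iff: "vge v c N \<Longrightarrow> vge v (x - c) N \<longleftrightarrow> vge v x N"
  using vge_add[of "x - c" N c] vge_diff[of x N c] by auto

lemma vge_mult: "vge v x N \<Longrightarrow> vge v y M \<Longrightarrow> vge v (x * y) (N + M)"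
  by (cases "x = 0 \<or> y = 0") (auto simp: vge_def v_mult)

lemma vge_of_nat: "vge v (of_nat n) 0"
  by (induction n) (simp_all add: vge_add vge_one add.commute)

lemma vge_of_int: "vge v (of_int z) 0"
  using vge_of_nat[of "nat z"] vge_of_nat[of "nat (- z)"] vge_minus_iff[of "of_int z" 0]
  by (cases "z \<ge> 0") (simp_all add: of_nat_nat)

lemma vge_sum: "(\<And>i. i \<in> A \<Longrightarrow> vge v (f i) N) \<Longrightarrow> vge v (sum f A) N"
  by (induction A rule: infinite_finite_induct) (auto intro: vge_add)

lemma vge_power: "vge v x 0 \<Longrightarrow> vge v (x ^ n) 0"
  by (induction n) (simp_all add: vge_one vge_mult[where N = 0 and M = 0, simplified])

lemma vge_power_diff:
  assumes "vge v x 0" "vge v y 0" "vge v (x - y) N"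
  shows "vge v (x ^ n - y ^ n) N"
proof -
  have "vge v (\<Sum>i<n. y ^ (n - Suc i) * x ^ i) 0"
    using assms by (intro vge_sum) (simp add: vge_mult[where N = 0 and M = 0, simplified] vge_power)
  from vge_mult[OF assms(3) this] show ?thesis
    by (simp add: power_diff_sumr2)
qed

lemma eq_zero_if_vge_all:
  assumes "\<And>N. vge v x N"
  shows "x = 0"
  using assms[of "v x + 1"] by (simp add: vge_def)

definition vtendsto :: "(nat \<Rightarrow> 'a) \<Rightarrow> 'a \<Rightarrow> bool" where
  "vtendsto f l \<longleftrightarrow> (\<forall>N. \<exists>M. \<forall>n\<ge>M. vge v (f n - l) N)"

lemma vge_limit:
  assumes "vtendsto f l" and "\<And>n. n \<ge> n\<^sub>0 \<Longrightarrow> vge v (f n - c) N"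
  shows "vge v (l - c) N"
proof -
  obtain M where M: "\<And>n. n \<ge> M \<Longrightarrow> vge v (f n - l) N"
    using assms(1) unfolding vtendsto_def by blast
  define n where "n = max M n\<^sub>0"
  have "vge v ((f n - c) - (f n - l)) N"
    by (rule vge_diff) (simp_all add: n_def M assms(2))
  then show ?thesis
    by simp
qed

lemma vtendsto_power:
  assumes "vtendsto f l" and "\<And>n. vge v (f n) 0" and "vge v l 0"
  shows "vtendsto (\<lambda>n. f n ^ m) (l ^ m)"
  using assms vge_power_diff unfolding vtendsto_def by meson

end

locale padic_valuation =
  fixes p :: nat and v :: "'a::field_char_0 \<Rightarrow> int"
  assumes prime_p: "prime p" and padic_field: "padic_field p v"

sublocale padic_valuation \<subseteq> nonarch_valuation v
  using padic_field by unfold_locales (auto simp: padic_field_def)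

context padic_valuation
begin

lemma vge_p: "vge v (of_nat p) 1"
  using padic_field unfolding padic_field_def by blast

lemma vge_p_power: "vge v (of_nat p ^ m) (int m)"
  by (induction m) (simp_all add: vge_one vge_mult[OF vge_p] add.commute)

lemma vge_of_int_if_dvd: "int p ^ m dvd z \<Longrightarrow> vge v (of_int z) (int m)"
  using vge_mult[OF vge_p_power vge_of_int, of m] by (auto elim!: dvdE)

lemma vge_of_nat_diff_if_cong: "[a = b] (mod p ^ m) \<Longrightarrow> vge v (of_nat a - of_nat b) (int m)"
  using vge_of_int_if_dvd[of m "int a - int b"]
  by (simp add: cong_iff_dvd_diff flip: cong_int_iff)

lemma not_vge_of_nat_if_not_dvd:
  assumes "\<not> p dvd m"
  shows "\<not> vge v (of_nat m) 1"
proof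
  assume m: "vge v (of_nat m) 1"
  have "coprime (int p) (int m)"
    using assms prime_p by (simp add: prime_imp_coprime)
  then have "gcd (int p) (int m) = 1"
    by (rule coprime_imp_gcd_eq_1)
  then obtain a b where ab: "a * int p + b * int m = 1"
    using bezout_int[of "int p" "int m"] by metis
  have "vge v (of_int a * of_nat p + of_int b * of_nat m) (0 + 1)"
    by (intro vge_add vge_mult vge_of_int vge_p m)
  then have "vge v (of_int (a * int p + b * int m)) 1"
    by simp
  then show False
    using ab by (simp add: vge_def v_one)
qed

lemma complete_vtendsto:
  assumes "\<And>m n. m \<le> n \<Longrightarrow> vge v (f n - f m) (int m)"
  obtains l where "vtendsto f l"
proof -
  have "vge v (f m - f n) N" if "m \<ge> nat N" "n \<ge> nat N" for m n N
  proof -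
    have "vge v ((f m - f (nat N)) - (f n - f (nat N))) (int (nat N))"
      using that by (intro vge_diff assms)
    then have "vge v (f m - f n) (int (nat N))"
      by simp
    then show ?thesis
      by (rule vge_mono) simp
  qed
  then have "\<exists>l. vtendsto f l"
    using padic_field unfolding padic_field_def vtendsto_def by blast
  then show ?thesis
    using that by blast
qed

end

lemma euler_prime_power:
  fixes p k :: nat
  assumes "prime p" and "\<not> p dvd k"
  shows "[k ^ (p ^ n * (p - 1)) = 1] (mod p ^ Suc n)"
proof -
  have "coprime p k"
    using assms by (simp add: prime_imp_coprime)
  then have "coprime k (p ^ Suc n)"
    by (simp add: ac_simps)
  then show ?thesis
    using euler_theorem totient_prime_power_Suc[OF assms(1)] by metis
qed

lemma power_prime_power_cong:
  fixes p k :: nat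
  assumes "prime p" and "\<not> p dvd k" and "m \<le> n"
  shows "[k ^ (p ^ n) = k ^ (p ^ m)] (mod p ^ Suc m)"
  using assms(3)
proof (induction n rule: dec_induct)
  case (step n)
  have "[k ^ (p ^ n * (p - 1)) = 1] (mod p ^ Suc m)"
    using euler_prime_power[OF assms(1,2)] cong_dvd_modulus_nat le_imp_power_dvd step.hyps
    by (metis Suc_le_mono)
  then have "[k ^ (p ^ n) * k ^ (p ^ n * (p - 1)) = k ^ (p ^ m) * 1] (mod p ^ Suc m)"
    using step.IH cong_mult by blast
  moreover have "p ^ n + p ^ n * (p - 1) = p ^ Suc n"
    using prime_gt_0_nat[OF assms(1)] by (simp add: algebra_simps)
  ultimately show ?case
    by (simp flip: power_add)
qed simp

context padic_valuation
begin

definition is_teich :: "int \<Rightarrow> 'a \<Rightarrow> bool" where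
  "is_teich k x \<longleftrightarrow> vge v x 0 \<and> x ^ (p - 1) = 1 \<and> vge v (x - of_int k) 1"

lemma teich_def': "teich p v k = (THE x. is_teich k x)"
  unfolding teich_def is_teich_def ..

lemma root_of_unity_eq_one_if_cong:
  assumes "z ^ m = 1" and "vge v (z - 1) 1" and "\<not> p dvd m"
  shows "z = 1"
proof (rule ccontr)
  assume "z \<noteq> 1"
  have "(z - 1) * (\<Sum>i<m. z ^ i) = 0"
    using assms(1) power_diff_sumr2[of z m 1] by simp
  then have "(\<Sum>i<m. z ^ i - 1) = - of_nat m"
    using \<open>z \<noteq> 1\<close> by (simp add: sum_subtractf)
  moreover have "vge v (\<Sum>i<m. z ^ i - 1) 1"
  proof (rule vge_sum)
    have "vge v z 0"
      using vge_add[OF vge_mono[OF assms(2)] vge_one] by simp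
    then show "vge v (z ^ i - 1) 1" for i
      using vge_power_diff[OF _ vge_one assms(2), of i] by simp
  qed
  ultimately show False
    using not_vge_of_nat_if_not_dvd[OF assms(3)] by simp
qed

lemma roots_of_unity_eq_if_cong:
  assumes "x ^ m = 1" and "y ^ m = 1" and "vge v y 0" and "vge v (x - y) 1" and "\<not> p dvd m"
  shows "x = y"
proof -
  have "m > 0"
    using assms(5) by (metis dvd_0_right gr0I)
  then have y_inverse: "y * y ^ (m - 1) = 1"
    using assms(2) by (simp flip: power_Suc)
  have "(y ^ (m - 1)) ^ m = (y ^ m) ^ (m - 1)"
    by (simp flip: power_mult add: mult.commute)
  then have "(x * y ^ (m - 1)) ^ m = 1"
    using assms(1,2) by (simp add: power_mult_distrib)
  moreover have "x * y ^ (m - 1) - 1 = (x - y) * y ^ (m - 1)"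
    using y_inverse by (simp add: algebra_simps)
  then have "vge v (x * y ^ (m - 1) - 1) 1"
    using vge_mult[OF assms(4) vge_power[OF assms(3)]] by simp
  ultimately have "x * y ^ (m - 1) = 1"
    using assms(5) by (rule root_of_unity_eq_one_if_cong)
  then have "x * (y * y ^ (m - 1)) = y"
    by (metis mult.left_commute mult_1_right)
  then show ?thesis
    by (simp only: y_inverse mult_1_right)
qed

lemma not_dvd_p_minus_one: "\<not> p dvd p - 1"
  using prime_gt_1_nat[OF prime_p] dvd_imp_le[of p "p - 1"] by linarith

lemma is_teich_unique:
  assumes "is_teich k x" and "is_teich k y"
  shows "x = y"
proof (rule roots_of_unity_eq_if_cong[OF _ _ _ _ not_dvd_p_minus_one])
  have "vge v ((x - of_int k) - (y - of_int k)) 1"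
    using assms vge_diff[of "x - of_int k" 1 "y - of_int k"] by (simp add: is_teich_def)
  then show "vge v (x - y) 1"
    by simp
qed (use assms in \<open>auto simp: is_teich_def\<close>)

lemma is_teich_exists:
  assumes "\<not> p dvd k"
  shows "\<exists>x. is_teich (int k) x"
proof -
  define f where "f n = (of_nat (k ^ p ^ n) :: 'a)" for n
  have f_cong: "vge v (f n - f m) (int (Suc m))" if "m \<le> n" for m n
    unfolding f_def using vge_of_nat_diff_if_cong[OF power_prime_power_cong[OF prime_p assms that]] .
  have "vge v (f n - f m) (int m)" if "m \<le> n" for m n
    using f_cong[OF that] by (rule vge_mono) simp
  then obtain l where l: "vtendsto f l"
    by (rule complete_vtendsto)
  have f_int: "vge v (f n) 0" for n
    unfolding f_def by (rule vge_of_nat)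
  have "vge v (l - 0) 0"
    by (rule vge_limit[OF l]) (simp add: f_int)
  then have l_int: "vge v l 0"
    by simp
  have "vge v (l - of_int (int k)) 1"
    by (rule vge_limit[OF l]) (use f_cong[of 0] in \<open>simp add: f_def\<close>)
  moreover have "l ^ (p - 1) = 1"
  proof -
    have "vge v (l ^ (p - 1) - 1) N" for N
    proof (rule vge_limit[OF vtendsto_power[OF l f_int l_int]])
      fix n
      assume "n \<ge> nat N"
      have "vge v (of_nat (k ^ (p ^ n * (p - 1))) - of_nat 1 :: 'a) (int (Suc n))"
        by (rule vge_of_nat_diff_if_cong[OF euler_prime_power[OF prime_p assms]])
      then have "vge v (f n ^ (p - 1) - 1) (int (Suc n))"
        by (simp add: f_def power_mult)
      then show "vge v (f n ^ (p - 1) - 1) N"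
        by (rule vge_mono) (use \<open>n \<ge> nat N\<close> in linarith)
    qed
    then show ?thesis
      using eq_zero_if_vge_all[of "l ^ (p - 1) - 1"] by simp
  qed
  ultimately show ?thesis
    using l_int unfolding is_teich_def by blast
qed

lemma is_teich_teich: "\<not> p dvd k \<Longrightarrow> is_teich (int k) (teich p v (int k))"
  unfolding teich_def' using is_teich_exists is_teich_unique by (metis theI)

lemma teich_eqI: "is_teich k x \<Longrightarrow> teich p v k = x"
  unfolding teich_def' using is_teich_unique by blast

lemma teich_one: "teich p v 1 = 1"
  by (rule teich_eqI) (simp add: is_teich_def vge_one)

lemma teich_uminus:
  assumes "odd p" and "\<not> p dvd k" and "int p dvd int k + k'"
  shows "teich p v k' = - teich p v (int k)"
proof (rule teich_eqI)
  let ?t = "teich p v (int k)"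
  have t: "is_teich (int k) ?t"
    by (rule is_teich_teich[OF assms(2)])
  have "vge v (of_int (int k + k') :: 'a) (int 1)"
    by (rule vge_of_int_if_dvd) (use assms(3) in simp)
  moreover have "vge v (- (?t - of_int (int k))) 1"
    using t by (simp only: is_teich_def vge_minus_iff)
  ultimately have "vge v (- (?t - of_int (int k)) - of_int (int k + k')) 1"
    by (intro vge_diff) simp_all
  moreover have "- (?t - of_int (int k)) - of_int (int k + k') = - ?t - of_int k'"
    by simp
  moreover have "(- ?t) ^ (p - 1) = ?t ^ (p - 1)"
    using assms(1) by simp
  ultimately show "is_teich k' (- ?t)"
    using t by (simp add: is_teich_def)
qed

lemma teich_minus_one: "odd p \<Longrightarrow> teich p v (-1) = -1"
  using teich_uminus[of 1 "-1"] prime_gt_1_nat[OF prime_p] by (simp add: teich_one)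

lemma gamma_idx_reflect:
  assumes "odd p" and "\<not> p dvd k" and "k \<le> p ^ (n + 1)"
  shows "gamma_idx p v n (int (p ^ (n + 1) - k)) = gamma_idx p v n (int k)"
proof -
  let ?N = "of_nat p ^ (n + 1) :: 'a"
  have "teich p v (int (p ^ (n + 1) - k)) = - teich p v (int k)"
    using assms by (intro teich_uminus) (simp_all add: of_nat_diff)
  then have reflect: "of_nat u * teich p v (int (p ^ (n + 1) - k)) - of_int (int (p ^ (n + 1) - k))
      = - (of_nat u * teich p v (int k) - of_int (int k)) - ?N" for u
    using assms(3) by (simp add: of_nat_diff algebra_simps)
  have "vge v ?N (v ?N)"
    by (simp add: vge_def)
  then have "vge v (of_nat u * teich p v (int (p ^ (n + 1) - k)) - of_int (int (p ^ (n + 1) - k))) (v ?N)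
      \<longleftrightarrow> vge v (of_nat u * teich p v (int k) - of_int (int k)) (v ?N)" for u
    unfolding reflect by (simp only: vge_diff_iff vge_minus_iff)
  then show ?thesis
    unfolding gamma_idx_def by simp
qed

end

lemma power_quotient_reflect:
  fixes a :: "'a::field"
  assumes "0 < k" and "k < N"
  shows "a ^ (N - k) / (a ^ N - 1) = - (inverse a ^ k / (inverse a ^ N - 1))"
proof (cases "a = 0")
  case False
  have "a ^ N = a ^ (N - k) * a ^ k"
    using assms by (simp flip: power_add)
  with False show ?thesis
    by (cases "a ^ N = 1") (simp_all add: power_inverse field_simps)
qed (use assms in \<open>simp add: power_0_left\<close>)

lemma (in padic_valuation) mirimanoff_inverse:
  assumes "odd p"
  shows "mirimanoff p v j a n u = (-1) ^ j * mirimanoff p v j (inverse a) n u"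
proof -
  define N where "N = p ^ (n + 1)"
  define S where "S = {k. 1 \<le> k \<and> k \<le> N - 1 \<and> \<not> p dvd k \<and> gamma_idx p v n (int k) = u}"
  define summand where
    "summand b k = b ^ k / (b ^ N - 1) * teich p v (int k) ^ j * inverse (teich p v (int k))" for b k
  have mirimanoff_eq: "mirimanoff p v j b n u = sum (summand b) S" for b
    unfolding mirimanoff_def S_def summand_def N_def by simp
  have S_bounds: "0 < k \<and> k < N \<and> \<not> p dvd k" if "k \<in> S" for k
    using that prime_gt_0_nat[OF prime_p] by (auto simp: S_def N_def)
  have reflect_S: "N - k \<in> S" if "k \<in> S" for k
  proof -
    have "p dvd N"
      by (simp add: N_def)
    then have "\<not> p dvd N - k"
      using S_bounds[OF that] dvd_diff_nat[of p N "N - k"] by auto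
    then show ?thesis
      using that gamma_idx_reflect[OF assms] by (auto simp: S_def N_def)
  qed
  have "sum (summand a) S = (\<Sum>k\<in>S. summand a (N - k))"
    by (rule sum.reindex_bij_witness[where i = "\<lambda>k. N - k" and j = "\<lambda>k. N - k"])
       (auto simp: reflect_S dest: S_bounds)
  also have "\<dots> = (\<Sum>k\<in>S. (-1) ^ j * summand (inverse a) k)"
  proof (rule sum.cong[OF refl])
    fix k
    assume "k \<in> S"
    then have k: "0 < k" "k < N" "\<not> p dvd k"
      using S_bounds by auto
    have teich_reflect: "teich p v (int (N - k)) = - teich p v (int k)"
      using k assms by (intro teich_uminus) (simp_all add: N_def of_nat_diff)
    show "summand a (N - k) = (-1) ^ j * summand (inverse a) k"
      unfolding summand_def power_quotient_reflect[OF k(1,2)] teich_reflect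
      by (simp add: power_minus[of "teich p v (int k)" j])
  qed
  finally show ?thesis
    by (simp add: mirimanoff_eq sum_distrib_left)
qed

theorem lemma3p2:
  fixes p j :: nat and v :: "'a::field_char_0 \<Rightarrow> int" and \<pi> a :: 'a
  assumes "prime p" and "p \<ge> 5"
    and "padic_field p v"
    and "\<pi> \<noteq> 0" and "v \<pi> = 1"
    and "j < p - 1"
    and "a \<in> int_ring v"
    and "\<not> (\<exists>b\<in>int_ring v. a * (a - 1) = \<pi> * b)"
  shows "mirimanoff p v j a =
    (\<lambda>n u. - (teich p v (-1) ^ j) * inverse (teich p v (-1)) * mirimanoff p v j (inverse a) n u)"
proof -
  interpret padic_valuation p v
    using assms(1,3) by unfold_locales
  have "odd p"
    using prime_odd_nat[OF assms(1)] assms(2) by simp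
  show ?thesis
    by (intro ext) (simp add: mirimanoff_inverse[OF \<open>odd p\<close>, of j a] teich_minus_one[OF \<open>odd p\<close>])
qed

end
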